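(* Let $G=(V,E)$ be a connected graph with positive edge costs $c:E\to\mathbb{R}_+$, let $\alpha\ge 1$, and let $(U,\complement{U})$ be an $\alpha$-approximate minimum cut of $G$. Then there exist subsets $S,T\subseteq V$ with $|S|,|T|\le \lfloor 2\alpha\rfloor+1$ such that $(U,\complement{U})$ is the unique minimum $(S,T)$-terminal cut.
   Context: A cut is a partition of $V$ into two non-empty parts; for $\emptyset\ne U\subsetneq V$ write $\complement{U}=V\setminus U$, $(U,\complement{U})$ for the corresponding cut, $\delta(U)$ for the set of edges with exactly one endpoint in $U$, and $d(U)=\sum_{e\in\delta(U)}c(e)$ for its cut value. Let $\lambda=\min\{d(U):\emptyset\ne U\subsetneq V\}$. For $\alpha\ge1$, the cut $(U,\complement{U})$ is an $\alpha$-approximate minimum cut if $d(U)\le\alpha\lambda$. For disjoint non-empty $S,T\subseteq V$, a cut $(U,\complement{U})$ is an $(S,T)$-terminal cut if $S\subseteq U\subseteq V\setminus T$; a minimum $(S,T)$-terminal cut is an $(S,T)$-terminal cut of minimum cut value $d(U)$. *)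

theory Defs
  imports Complex_Main
begin

definition graph :: "'a set \<Rightarrow> 'a set set \<Rightarrow> bool" where
  "graph V E \<longleftrightarrow> finite V \<and> (\<forall>e\<in>E. \<exists>u v. e = {u, v} \<and> u \<noteq> v \<and> u \<in> V \<and> v \<in> V)"

definition adj :: "'a set set \<Rightarrow> ('a \<times> 'a) set" where
  "adj E = {(u, v). {u, v} \<in> E}"

definition connected_graph :: "'a set \<Rightarrow> 'a set set \<Rightarrow> bool" where
  "connected_graph V E \<longleftrightarrow> graph V E \<and> (\<forall>u\<in>V. \<forall>v\<in>V. (u, v) \<in> (adj E)\<^sup>*)"

definition delta :: "'a set set \<Rightarrow> 'a set \<Rightarrow> 'a set set" where
  "delta E U = {e \<in> E. card (e \<inter> U) = 1}"

definition cut_value :: "'a set set \<Rightarrow> ('a set \<Rightarrow> real) \<Rightarrow> 'a set \<Rightarrow> real" where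
  "cut_value E c U = (\<Sum>e\<in>delta E U. c e)"

definition is_cut :: "'a set \<Rightarrow> 'a set \<Rightarrow> bool" where
  "is_cut V U \<longleftrightarrow> U \<noteq> {} \<and> U \<subset> V"

definition min_cut_value :: "'a set \<Rightarrow> 'a set set \<Rightarrow> ('a set \<Rightarrow> real) \<Rightarrow> real" where
  "min_cut_value V E c = Min {cut_value E c U | U. is_cut V U}"

definition approx_min_cut ::
  "'a set \<Rightarrow> 'a set set \<Rightarrow> ('a set \<Rightarrow> real) \<Rightarrow> real \<Rightarrow> 'a set \<Rightarrow> bool" where
  "approx_min_cut V E c \<alpha> U \<longleftrightarrow> is_cut V U \<and> cut_value E c U \<le> \<alpha> * min_cut_value V E c"

definition terminal_cut :: "'a set \<Rightarrow> 'a set \<Rightarrow> 'a set \<Rightarrow> 'a set \<Rightarrow> bool" where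
  "terminal_cut V S T U \<longleftrightarrow> S \<noteq> {} \<and> T \<noteq> {} \<and> S \<subseteq> V \<and> T \<subseteq> V \<and> S \<inter> T = {}
     \<and> S \<subseteq> U \<and> U \<subseteq> V - T"

definition unique_min_terminal_cut ::
  "'a set \<Rightarrow> 'a set set \<Rightarrow> ('a set \<Rightarrow> real) \<Rightarrow> 'a set \<Rightarrow> 'a set \<Rightarrow> 'a set \<Rightarrow> bool" where
  "unique_min_terminal_cut V E c S T U \<longleftrightarrow> terminal_cut V S T U \<and>
     (\<forall>W. terminal_cut V S T W \<and> W \<noteq> U \<longrightarrow> cut_value E c U < cut_value E c W)"

end

theory Submission
  imports Defs
begin

(* Call S a certificate for U if S \<subseteq> U and every W with S \<subseteq> W \<subset> U has d(W) > d(U).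
   Certificates S for U and T for V - U make U the unique minimum (S,T)-terminal cut, by
   submodularity applied to W \<inter> U and W \<union> U. Since V - U is an \<alpha>-approximate minimum cut
   as well, it suffices to show that a certificate S of minimum size satisfies |S| \<lambda> \<le> 2 d(U).
   Minimality yields for every u \<in> S a set X u \<subseteq> U with X u \<inter> S = {u} and
   d(U - X u) \<le> d(U). The private parts Z u of the X u (the points covered by no other X v)
   are cuts, so |S| \<lambda> \<le> \<Sum> d(Z u). Counting edge by edge, \<Sum> d(Z u) plus the excesses
   d(U) - d(U - X u) and d(U - L j) - d(U) is at most 2 d(U), where L j is the set of points of U
   covered by at least j \<ge> 3 of the X u; all excesses are nonnegative, the last ones because
   L j misses S. *)

section \<open>Cut values\<close>

lemma graph_finite_edges: "graph V E \<Longrightarrow> finite E"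
  by (rule finite_subset[of _ "Pow V"]) (auto simp: graph_def)

lemma graph_edgeE:
  assumes "graph V E" and "e \<in> E"
  obtains a b where "e = {a, b}" and "a \<noteq> b" and "a \<in> V" and "b \<in> V"
  using assms by (auto simp: graph_def)

definition crosses :: "'a set \<Rightarrow> 'a set \<Rightarrow> bool" where
  "crosses e W \<longleftrightarrow> card (e \<inter> W) = 1"

lemma crosses_pair: "a \<noteq> b \<Longrightarrow> crosses {a, b} W \<longleftrightarrow> (a \<in> W) \<noteq> (b \<in> W)"
  by (cases "a \<in> W"; cases "b \<in> W") (auto simp: crosses_def)

lemma cut_value_eq_sum_crosses:
  "finite E \<Longrightarrow> cut_value E c W = (\<Sum>e\<in>E. c e * of_bool (crosses e W))"
  by (simp add: cut_value_def delta_def crosses_def Collect_conj_eq Int_commute)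

lemma cut_value_nonneg: "\<forall>e\<in>E. 0 \<le> c e \<Longrightarrow> 0 \<le> cut_value E c W"
  unfolding cut_value_def delta_def by (rule sum_nonneg) simp

lemma cut_value_empty [simp]: "cut_value E c {} = 0"
  by (simp add: cut_value_def delta_def)

lemma cut_value_complement:
  assumes "graph V E" shows "cut_value E c (V - W) = cut_value E c W"
proof -
  have "crosses e (V - W) \<longleftrightarrow> crosses e W" if "e \<in> E" for e
    using assms that by (rule graph_edgeE) (auto simp: crosses_pair)
  then show ?thesis
    using graph_finite_edges[OF assms] by (simp add: cut_value_eq_sum_crosses)
qed

lemma cut_value_submodular:
  assumes "graph V E" and "\<forall>e\<in>E. 0 \<le> c e"
  shows "cut_value E c (A \<inter> B) + cut_value E c (A \<union> B) \<le> cut_value E c A + cut_value E c B"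
proof -
  have "of_bool (crosses e (A \<inter> B)) + of_bool (crosses e (A \<union> B))
      \<le> (of_bool (crosses e A) + of_bool (crosses e B) :: real)" if "e \<in> E" for e
    using assms(1) that by (rule graph_edgeE) (auto simp: crosses_pair)
  then have "(\<Sum>e\<in>E. c e * of_bool (crosses e (A \<inter> B)) + c e * of_bool (crosses e (A \<union> B)))
      \<le> (\<Sum>e\<in>E. c e * of_bool (crosses e A) + c e * of_bool (crosses e B))"
    using assms(2) by (intro sum_mono) (simp flip: distrib_left add: mult_left_mono)
  then show ?thesis
    using graph_finite_edges[OF assms(1)] by (simp add: cut_value_eq_sum_crosses sum.distrib)
qed

lemma cut_value_pos:
  assumes conn: "connected_graph V E" and pos: "\<forall>e\<in>E. 0 < c e" and W: "is_cut V W"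
  shows "0 < cut_value E c W"
proof -
  obtain x y where x: "x \<in> W" and y: "y \<in> V" "y \<notin> W" and "x \<in> V"
    using W by (auto simp: is_cut_def)
  then have "(x, y) \<in> (adj E)\<^sup>*"
    using conn by (simp add: connected_graph_def)
  then have "y \<notin> W \<longrightarrow> (\<exists>e\<in>E. crosses e W)"
  proof (induction rule: rtrancl_induct)
    case (step y z)
    then show ?case
      using crosses_pair[of y z W] by (cases "y \<in> W") (auto simp: adj_def)
  qed (use x in simp)
  then obtain e where e: "e \<in> delta E W"
    using y by (auto simp: delta_def crosses_def)
  have "finite (delta E W)"
    using conn by (auto simp: connected_graph_def delta_def dest: graph_finite_edges)
  then have "c e \<le> cut_value E c W"
    unfolding cut_value_def using e pos by (intro member_le_sum) (auto simp: delta_def less_imp_le)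
  then show ?thesis
    using e pos by (auto simp: delta_def)
qed

lemma finite_cut_values: "finite V \<Longrightarrow> finite {cut_value E c W | W. is_cut V W}"
proof -
  assume "finite V"
  then have "finite {W. is_cut V W}"
    by (rule finite_subset[rotated, OF finite_Pow_iff[THEN iffD2]]) (auto simp: is_cut_def)
  then show ?thesis
    by (simp add: setcompr_eq_image)
qed

lemma min_cut_value_le:
  "graph V E \<Longrightarrow> is_cut V W \<Longrightarrow> min_cut_value V E c \<le> cut_value E c W"
  unfolding min_cut_value_def graph_def by (auto intro: Min_le finite_cut_values)

lemma min_cut_value_pos:
  assumes conn: "connected_graph V E" and "\<forall>e\<in>E. 0 < c e" and "is_cut V U"
  shows "0 < min_cut_value V E c"
proof -
  have "finite V"
    using conn by (simp add: connected_graph_def graph_def)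
  then have "min_cut_value V E c \<in> {cut_value E c W | W. is_cut V W}"
    unfolding min_cut_value_def using \<open>is_cut V U\<close> by (intro Min_in finite_cut_values) auto
  then show ?thesis
    using cut_value_pos[OF assms(1,2)] by auto
qed

section \<open>Certificates\<close>

definition certifies :: "'a set set \<Rightarrow> ('a set \<Rightarrow> real) \<Rightarrow> 'a set \<Rightarrow> 'a set \<Rightarrow> bool" where
  "certifies E c S U \<longleftrightarrow> S \<subseteq> U \<and> (\<forall>W. S \<subseteq> W \<longrightarrow> W \<subset> U \<longrightarrow> cut_value E c U < cut_value E c W)"

lemma certifies_subset: "certifies E c S U \<Longrightarrow> S \<subseteq> U"
  by (simp add: certifies_def)

lemma certifies_less:
  "certifies E c S U \<Longrightarrow> S \<subseteq> W \<Longrightarrow> W \<subset> U \<Longrightarrow> cut_value E c U < cut_value E c W"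
  by (simp add: certifies_def)

lemma certifies_le:
  "certifies E c S U \<Longrightarrow> S \<subseteq> W \<Longrightarrow> W \<subseteq> U \<Longrightarrow> cut_value E c U \<le> cut_value E c W"
  by (cases "W = U") (auto intro: less_imp_le certifies_less)

lemma certifies_nonempty:
  assumes "\<forall>e\<in>E. 0 \<le> c e" and "U \<noteq> {}" and "certifies E c S U"
  shows "S \<noteq> {}"
proof
  assume "S = {}"
  then have "cut_value E c U < cut_value E c {}"
    using certifies_less[OF assms(3)] assms(2) by blast
  then show False
    using cut_value_nonneg[OF assms(1), of U] by simp
qed

lemma certifies_unique_min_terminal_cut:
  assumes G: "graph V E" and nonneg: "\<forall>e\<in>E. 0 \<le> c e" and "U \<subseteq> V"
    and "S \<noteq> {}" and "T \<noteq> {}"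
    and S: "certifies E c S U" and T: "certifies E c T (V - U)"
  shows "unique_min_terminal_cut V E c S T U"
proof -
  let ?d = "cut_value E c"
  have "S \<subseteq> U" and "T \<subseteq> V - U"
    using S T by (simp_all add: certifies_subset)
  then have "terminal_cut V S T U"
    using \<open>U \<subseteq> V\<close> \<open>S \<noteq> {}\<close> \<open>T \<noteq> {}\<close> by (auto simp: terminal_cut_def)
  moreover have "?d U < ?d W" if W: "terminal_cut V S T W" "W \<noteq> U" for W
  proof -
    have "S \<subseteq> W \<inter> U" and "T \<subseteq> V - (W \<union> U)" and "W \<union> U \<subseteq> V"
      using W \<open>S \<subseteq> U\<close> \<open>T \<subseteq> V - U\<close> \<open>U \<subseteq> V\<close> by (auto simp: terminal_cut_def)
    have inter: "?d U \<le> ?d (W \<inter> U)"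
      using certifies_le[OF S \<open>S \<subseteq> W \<inter> U\<close>] by blast
    have "?d (V - U) \<le> ?d (V - (W \<union> U))"
      using certifies_le[OF T \<open>T \<subseteq> V - (W \<union> U)\<close>] by blast
    then have union: "?d U \<le> ?d (W \<union> U)"
      by (simp only: cut_value_complement[OF G])
    have "W \<inter> U \<subset> U \<or> V - (W \<union> U) \<subset> V - U"
      using W(2) \<open>W \<union> U \<subseteq> V\<close> \<open>U \<subseteq> V\<close> by auto
    then have "?d U < ?d (W \<inter> U) \<or> ?d (V - U) < ?d (V - (W \<union> U))"
      using certifies_less[OF S \<open>S \<subseteq> W \<inter> U\<close>] certifies_less[OF T \<open>T \<subseteq> V - (W \<union> U)\<close>]
      by blast
    then have "?d U < ?d (W \<inter> U) \<or> ?d U < ?d (W \<union> U)"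
      by (simp only: cut_value_complement[OF G])
    then show ?thesis
      using inter union cut_value_submodular[OF G nonneg, of W U] by linarith
  qed
  ultimately show ?thesis
    by (auto simp: unique_min_terminal_cut_def)
qed

section \<open>Private parts and cover levels\<close>

definition cover_count :: "'i set \<Rightarrow> ('i \<Rightarrow> 'a set) \<Rightarrow> 'a \<Rightarrow> nat" where
  "cover_count S X x = card {u\<in>S. x \<in> X u}"

definition private_part :: "'i set \<Rightarrow> ('i \<Rightarrow> 'a set) \<Rightarrow> 'i \<Rightarrow> 'a set" where
  "private_part S X u = {x\<in>X u. \<forall>v\<in>S. x \<in> X v \<longrightarrow> v = u}"

definition cover_level :: "'i set \<Rightarrow> ('i \<Rightarrow> 'a set) \<Rightarrow> 'a set \<Rightarrow> nat \<Rightarrow> 'a set" where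
  "cover_level S X U j = {x\<in>U. j \<le> cover_count S X x}"

definition cover_sum :: "('a set \<Rightarrow> real) \<Rightarrow> 'i set \<Rightarrow> ('i \<Rightarrow> 'a set) \<Rightarrow> 'a set \<Rightarrow> real" where
  "cover_sum f S X U = (\<Sum>u\<in>S. f (private_part S X u)) + (\<Sum>u\<in>S. f U - f (U - X u))
     + (\<Sum>j=3..card S. f (U - cover_level S X U j) - f U)"

lemma sum_of_bool_mem_subset:
  "finite S \<Longrightarrow> A \<subseteq> S \<Longrightarrow> (\<Sum>u\<in>S. of_bool (u \<in> A)) = of_nat (card A)"
  by (simp add: Int_absorb1)

lemma private_part_subset: "private_part S X u \<subseteq> X u"
  by (auto simp: private_part_def)

lemma mem_private_part_iff:
  "u \<in> S \<Longrightarrow> x \<in> private_part S X u \<longleftrightarrow> {v\<in>S. x \<in> X v} = {u}"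
  by (auto simp: private_part_def)

lemma sum_crosses_private_part:
  assumes "finite S" and "a \<noteq> b"
  shows "(\<Sum>u\<in>S. of_bool (crosses {a, b} (private_part S X u)))
    = real (card {u\<in>S. ({v\<in>S. a \<in> X v} = {u}) \<noteq> ({v\<in>S. b \<in> X v} = {u})})"
proof -
  have "(\<Sum>u\<in>S. of_bool (crosses {a, b} (private_part S X u)))
      = (\<Sum>u\<in>S. of_bool (({v\<in>S. a \<in> X v} = {u}) \<noteq> ({v\<in>S. b \<in> X v} = {u})) :: real)"
    using assms(2) by (intro sum.cong) (simp_all add: crosses_pair mem_private_part_iff)
  then show ?thesis
    using assms(1) by (simp add: Collect_conj_eq)
qed

lemma Int_eq_singletonD: "A \<inter> S = {u} \<Longrightarrow> s \<in> S \<Longrightarrow> s \<in> A \<longleftrightarrow> s = u"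
  by blast

lemma self_mem_private_part:
  assumes "\<forall>v\<in>S. X v \<inter> S = {v}" and "u \<in> S"
  shows "u \<in> private_part S X u"
proof -
  have "u \<in> X u"
    using Int_eq_singletonD[of "X u" S u u] assms by blast
  moreover have "v = u" if "v \<in> S" and "u \<in> X v" for v
    using Int_eq_singletonD[of "X v" S v u] assms that by blast
  ultimately show ?thesis
    by (simp add: private_part_def)
qed

lemma cover_count_eq_one:
  assumes "\<forall>v\<in>S. X v \<inter> S = {v}" and "s \<in> S"
  shows "cover_count S X s = 1"
proof -
  have "s \<in> X v \<longleftrightarrow> v = s" if "v \<in> S" for v
    using Int_eq_singletonD[of "X v" S v s] assms that by blast
  then have "{v\<in>S. s \<in> X v} = {s}"
    using assms(2) by auto
  then show ?thesis
    by (simp add: cover_count_def)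
qed

lemma card_Collect_eq_singleton: "card {u. P = {u}} = of_bool (card P = 1)"
  by (auto simp: card_1_singleton_iff)

lemma card_level_mismatch_le:
  "card {j\<in>{3..k}. (j \<le> p) \<noteq> (j \<le> q)} \<le> max p q - max 2 (min p q)"
proof -
  have "card {j\<in>{3..k}. (j \<le> p) \<noteq> (j \<le> q)} \<le> card {max 2 (min p q)<..max p q}"
    by (rule card_mono) auto
  then show ?thesis
    by simp
qed

lemma card_singleton_mismatch_add_level_mismatch_le:
  assumes "finite P" and "finite Q"
  shows "card {u\<in>S. (P = {u}) \<noteq> (Q = {u})} + card {j\<in>{3..k}. (j \<le> card P) \<noteq> (j \<le> card Q)}
    \<le> card (P - Q) + card (Q - P)"
proof (cases "P = Q")
  case True
  then have "{u\<in>S. (P = {u}) \<noteq> (Q = {u})} = {}" and "{j\<in>{3..k}. (j \<le> card P) \<noteq> (j \<le> card Q)} = {}"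
    by auto
  then show ?thesis
    by (simp only: card.empty)
next
  case False
  let ?i = "card (P \<inter> Q)"
  have "finite {u. P = {u}}" and "finite {u. Q = {u}}"
    using assms by (auto intro: finite_subset[of _ P] finite_subset[of _ Q])
  then have "card {u\<in>S. (P = {u}) \<noteq> (Q = {u})} \<le> card ({u. P = {u}} \<union> {u. Q = {u}})"
    by (intro card_mono) auto
  also have "\<dots> \<le> card {u. P = {u}} + card {u. Q = {u}}"
    by (rule card_Un_le)
  finally have singletons:
    "card {u\<in>S. (P = {u}) \<noteq> (Q = {u})} \<le> of_bool (card P = 1) + of_bool (card Q = 1)"
    by (simp only: card_Collect_eq_singleton)
  have diffs: "card (P - Q) = card P - ?i" "card (Q - P) = card Q - ?i"
    using assms by (simp_all add: card_Diff_subset_Int Int_commute)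
  have common: "?i \<le> card P" "?i \<le> card Q"
    using assms by (simp_all add: card_mono)
  have common_less: "?i < card P \<or> ?i < card Q"
  proof (rule ccontr)
    assume "\<not> ?thesis"
    then have "card P \<le> ?i" and "card Q \<le> ?i"
      by simp_all
    then have "P \<inter> Q = P" and "P \<inter> Q = Q"
      using card_seteq[OF assms(1) Int_lower1] card_seteq[OF assms(2) Int_lower2] by blast+
    then show False
      using False by blast
  qed
  have arith: "m + l \<le> (p - i) + (q - i)"
    if "m \<le> of_bool (p = 1) + of_bool (q = 1)" and "l \<le> max p q - max 2 (min p q)"
      and "i \<le> p" and "i \<le> q" and "i < p \<or> i < q" for m l p q i :: nat
    using that by (auto simp: of_bool_def max_def min_def split: if_splits)
  show ?thesis
    using arith[OF singletons card_level_mismatch_le common common_less] by (simp only: diffs)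
qed

lemma cover_sum_edge_leaving:
  assumes "finite S" and X: "\<forall>u\<in>S. X u \<subseteq> U" and "a \<in> U" and "b \<notin> U"
  shows "cover_sum (\<lambda>W. of_bool (crosses {a, b} W)) S X U \<le> 2"
proof -
  define P where "P = {u\<in>S. a \<in> X u}"
  have ab: "a \<noteq> b"
    using assms by blast
  have b_uncovered: "{v\<in>S. b \<in> X v} = {}"
    using X \<open>b \<notin> U\<close> by auto
  have "(\<Sum>u\<in>S. of_bool (crosses {a, b} (private_part S X u))) = real (card {u\<in>S. P = {u}})"
    using sum_crosses_private_part[OF \<open>finite S\<close> ab, of X] unfolding b_uncovered P_def by simp
  also have "\<dots> \<le> card {u. P = {u}}"
    using \<open>finite S\<close> by (intro of_nat_mono card_mono) (auto simp: P_def intro: finite_subset[of _ S])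
  also have "\<dots> = of_bool (card P = 1)"
    by (simp add: card_Collect_eq_singleton)
  finally have private_sum:
    "(\<Sum>u\<in>S. of_bool (crosses {a, b} (private_part S X u))) \<le> (of_bool (card P = 1) :: real)" .
  have "(\<Sum>u\<in>S. of_bool (crosses {a, b} U) - of_bool (crosses {a, b} (U - X u)))
      = (\<Sum>u\<in>S. of_bool (u \<in> P) :: real)"
    using ab assms by (intro sum.cong) (auto simp: crosses_pair P_def)
  also have "\<dots> = real (card P)"
    using \<open>finite S\<close> by (intro sum_of_bool_mem_subset) (auto simp: P_def)
  finally have removed:
    "(\<Sum>u\<in>S. of_bool (crosses {a, b} U) - of_bool (crosses {a, b} (U - X u))) = real (card P)" .
  have "cover_count S X a = card P"
    by (simp add: cover_count_def P_def)
  then have "(\<Sum>j=3..card S. of_bool (crosses {a, b} (U - cover_level S X U j)) - of_bool (crosses {a, b} U))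
      = (\<Sum>j=3..card S. - of_bool (j \<le> card P) :: real)"
    using ab assms by (intro sum.cong) (auto simp: crosses_pair cover_level_def)
  also have "\<dots> = - real (card ({3..card S} \<inter> {j. j \<le> card P}))"
    by (simp add: sum_negf)
  also have "{3..card S} \<inter> {j. j \<le> card P} = {3..card P}"
    using card_mono[OF \<open>finite S\<close>, of P] by (auto simp: P_def)
  finally have levels:
    "(\<Sum>j=3..card S. of_bool (crosses {a, b} (U - cover_level S X U j)) - of_bool (crosses {a, b} U))
      = - real (card P - 2)"
    by simp
  show ?thesis
    using private_sum removed levels unfolding cover_sum_def by (cases "card P = 1") auto
qed

lemma cover_sum_edge_inside:
  assumes "finite S" and "a \<in> U" and "b \<in> U" and ab: "a \<noteq> b"
  shows "cover_sum (\<lambda>W. of_bool (crosses {a, b} W)) S X U \<le> 0"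
proof -
  define P where "P = {u\<in>S. a \<in> X u}"
  define Q where "Q = {u\<in>S. b \<in> X u}"
  have "finite P" and "finite Q"
    using \<open>finite S\<close> by (simp_all add: P_def Q_def)
  have private_sum: "(\<Sum>u\<in>S. of_bool (crosses {a, b} (private_part S X u)))
      = real (card {u\<in>S. (P = {u}) \<noteq> (Q = {u})})"
    unfolding P_def Q_def by (rule sum_crosses_private_part[OF \<open>finite S\<close> ab])
  have "(\<Sum>u\<in>S. of_bool (crosses {a, b} U) - of_bool (crosses {a, b} (U - X u)))
      = (\<Sum>u\<in>S. - of_bool (u \<in> (P - Q) \<union> (Q - P)) :: real)"
    using ab assms by (intro sum.cong) (auto simp: crosses_pair P_def Q_def)
  also have "\<dots> = - real (card ((P - Q) \<union> (Q - P)))"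
  proof -
    have "(P - Q) \<union> (Q - P) \<subseteq> S"
      by (auto simp: P_def Q_def)
    then show ?thesis
      by (simp only: sum_negf sum_of_bool_mem_subset[OF \<open>finite S\<close>])
  qed
  also have "card ((P - Q) \<union> (Q - P)) = card (P - Q) + card (Q - P)"
    using \<open>finite P\<close> \<open>finite Q\<close> by (intro card_Un_disjoint) auto
  finally have removed: "(\<Sum>u\<in>S. of_bool (crosses {a, b} U) - of_bool (crosses {a, b} (U - X u)))
      = - real (card (P - Q) + card (Q - P))" .
  have "cover_count S X a = card P" and "cover_count S X b = card Q"
    by (simp_all add: cover_count_def P_def Q_def)
  then have "(\<Sum>j=3..card S. of_bool (crosses {a, b} (U - cover_level S X U j)) - of_bool (crosses {a, b} U))
      = (\<Sum>j=3..card S. of_bool ((j \<le> card P) \<noteq> (j \<le> card Q)) :: real)"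
    using ab assms by (intro sum.cong) (auto simp: crosses_pair cover_level_def)
  also have "\<dots> = real (card {j\<in>{3..card S}. (j \<le> card P) \<noteq> (j \<le> card Q)})"
    by (simp add: Int_def)
  finally have levels:
    "(\<Sum>j=3..card S. of_bool (crosses {a, b} (U - cover_level S X U j)) - of_bool (crosses {a, b} U))
      = real (card {j\<in>{3..card S}. (j \<le> card P) \<noteq> (j \<le> card Q)})" .
  show ?thesis
    using card_singleton_mismatch_add_level_mismatch_le[OF \<open>finite P\<close> \<open>finite Q\<close>, of S "card S"]
      private_sum removed levels
    unfolding cover_sum_def by linarith
qed

lemma cover_sum_edge_le:
  assumes "finite S" and X: "\<forall>u\<in>S. X u \<subseteq> U" and ab: "a \<noteq> b"
  shows "cover_sum (\<lambda>W. of_bool (crosses {a, b} W)) S X U \<le> 2 * of_bool (crosses {a, b} U)"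
proof -
  consider "a \<in> U" "b \<in> U" | "a \<in> U" "b \<notin> U" | "a \<notin> U" "b \<in> U" | "a \<notin> U" "b \<notin> U"
    by blast
  then show ?thesis
  proof cases
    case 1
    then show ?thesis
      using cover_sum_edge_inside[OF assms(1) _ _ ab] crosses_pair[OF ab, of U] by simp
  next
    case 2
    then show ?thesis
      using cover_sum_edge_leaving[OF assms(1,2)] crosses_pair[OF ab, of U] by simp
  next
    case 3
    then show ?thesis
      using cover_sum_edge_leaving[OF assms(1,2), of b a] crosses_pair[OF ab, of U] by (simp add: insert_commute)
  next
    case 4
    then have "\<not> crosses {a, b} (private_part S X u)" if "u \<in> S" for u
      using X that private_part_subset[of S X u] ab by (auto simp: crosses_pair)
    then have "(\<Sum>u\<in>S. of_bool (crosses {a, b} (private_part S X u)) :: real) = 0"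
      by simp
    with 4 show ?thesis
      using ab by (simp add: cover_sum_def crosses_pair)
  qed
qed

lemma cover_sum_weighted_sum:
  "cover_sum (\<lambda>W. \<Sum>e\<in>E. c e * g e W) S X U = (\<Sum>e\<in>E. c e * cover_sum (g e) S X U)"
  by (simp add: cover_sum_def sum_distrib_left right_diff_distrib distrib_left sum.distrib
      sum_subtractf sum.swap[of _ E] mult.left_commute)

lemma cover_sum_cut_value_le:
  assumes G: "graph V E" and nonneg: "\<forall>e\<in>E. 0 \<le> c e"
    and "finite S" and X: "\<forall>u\<in>S. X u \<subseteq> U"
  shows "cover_sum (cut_value E c) S X U \<le> 2 * cut_value E c U"
proof -
  have cut: "cut_value E c = (\<lambda>W. \<Sum>e\<in>E. c e * of_bool (crosses e W))"
    using graph_finite_edges[OF G] by (simp add: cut_value_eq_sum_crosses fun_eq_iff)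
  have "(\<Sum>e\<in>E. c e * cover_sum (\<lambda>W. of_bool (crosses e W)) S X U)
      \<le> (\<Sum>e\<in>E. c e * (2 * of_bool (crosses e U)))"
  proof (rule sum_mono)
    fix e assume "e \<in> E"
    then obtain a b where "e = {a, b}" and "a \<noteq> b"
      using G by (blast elim: graph_edgeE)
    then show "c e * cover_sum (\<lambda>W. of_bool (crosses e W)) S X U \<le> c e * (2 * of_bool (crosses e U))"
      using cover_sum_edge_le[OF \<open>finite S\<close> X] nonneg \<open>e \<in> E\<close> by (simp add: mult_left_mono)
  qed
  then show ?thesis
    unfolding cut cover_sum_weighted_sum by (simp add: sum_distrib_left mult.left_commute)
qed

section \<open>Minimum certificates\<close>

lemma minimal_certificate_witnesses:
  assumes S: "certifies E c S U" and minimal: "\<forall>u\<in>S. \<not> certifies E c (S - {u}) U"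
  obtains X where "\<forall>u\<in>S. X u \<subseteq> U" and "\<forall>u\<in>S. X u \<inter> S = {u}"
    and "\<forall>u\<in>S. cut_value E c (U - X u) \<le> cut_value E c U"
proof -
  have "\<exists>W. S - {u} \<subseteq> W \<and> W \<subseteq> U \<and> u \<notin> W \<and> cut_value E c W \<le> cut_value E c U" if "u \<in> S" for u
  proof -
    have "\<not> certifies E c (S - {u}) U" and "S - {u} \<subseteq> U"
      using minimal that certifies_subset[OF S] by auto
    then have "\<exists>W. S - {u} \<subseteq> W \<and> W \<subset> U \<and> \<not> cut_value E c U < cut_value E c W"
      unfolding certifies_def by blast
    then obtain W where W: "S - {u} \<subseteq> W" "W \<subset> U" "cut_value E c W \<le> cut_value E c U"
      by (auto simp: not_less)
    have "u \<notin> W"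
    proof
      assume "u \<in> W"
      then have "S \<subseteq> W"
        using W(1) by blast
      then show False
        using certifies_less[OF S _ W(2)] W(3) by linarith
    qed
    then show ?thesis
      using W by blast
  qed
  then obtain W where W: "\<forall>u\<in>S. S - {u} \<subseteq> W u \<and> W u \<subseteq> U \<and> u \<notin> W u \<and> cut_value E c (W u) \<le> cut_value E c U"
    by metis
  have "U - (U - W u) = W u" if "u \<in> S" for u
    using W that by blast
  moreover have "(U - W u) \<inter> S = {u}" if "u \<in> S" for u
    using W that certifies_subset[OF S] by blast
  ultimately show ?thesis
    using W by (intro that[of "\<lambda>u. U - W u"]) auto
qed

lemma sum_private_parts_le:
  assumes G: "graph V E" and nonneg: "\<forall>e\<in>E. 0 \<le> c e" and "finite S" and S: "certifies E c S U"
    and X_sub: "\<forall>u\<in>S. X u \<subseteq> U" and X_S: "\<forall>u\<in>S. X u \<inter> S = {u}"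
    and X_cut: "\<forall>u\<in>S. cut_value E c (U - X u) \<le> cut_value E c U"
  shows "(\<Sum>u\<in>S. cut_value E c (private_part S X u)) \<le> 2 * cut_value E c U"
proof -
  let ?d = "cut_value E c"
  have "0 \<le> (\<Sum>u\<in>S. ?d U - ?d (U - X u))"
    using X_cut by (intro sum_nonneg) simp
  moreover have "?d U \<le> ?d (U - cover_level S X U j)" if "3 \<le> j" for j
  proof (rule certifies_le[OF S])
    show "S \<subseteq> U - cover_level S X U j"
      using certifies_subset[OF S] cover_count_eq_one[OF X_S] \<open>3 \<le> j\<close> by (auto simp: cover_level_def)
  qed auto
  then have "0 \<le> (\<Sum>j=3..card S. ?d (U - cover_level S X U j) - ?d U)"
    by (intro sum_nonneg) simp
  moreover have "cover_sum ?d S X U \<le> 2 * ?d U"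
    using cover_sum_cut_value_le[OF G nonneg \<open>finite S\<close> X_sub] .
  ultimately show ?thesis
    unfolding cover_sum_def by linarith
qed

lemma minimum_certificate_card_bound:
  assumes G: "graph V E" and nonneg: "\<forall>e\<in>E. 0 \<le> c e" and U: "is_cut V U"
  obtains S where "certifies E c S U" and "S \<noteq> {}"
    and "real (card S) * min_cut_value V E c \<le> 2 * cut_value E c U"
proof -
  let ?d = "cut_value E c"
  have "certifies E c U U"
    by (auto simp: certifies_def)
  then obtain S where S: "certifies E c S U" and least: "\<And>S'. certifies E c S' U \<Longrightarrow> card S \<le> card S'"
    using ex_has_least_nat[of "\<lambda>S. certifies E c S U" U card] by blast
  have "finite U"
    using G U finite_subset by (auto simp: graph_def is_cut_def)
  then have "finite S"
    using certifies_subset[OF S] finite_subset by blast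
  have "S \<noteq> {}"
    using certifies_nonempty[OF nonneg _ S] U by (simp add: is_cut_def)
  have "\<forall>u\<in>S. \<not> certifies E c (S - {u}) U"
    using least \<open>finite S\<close> by (metis card_Diff1_less not_le)
  then obtain X where X_sub: "\<forall>u\<in>S. X u \<subseteq> U" and X_S: "\<forall>u\<in>S. X u \<inter> S = {u}"
    and X_cut: "\<forall>u\<in>S. ?d (U - X u) \<le> ?d U"
    using minimal_certificate_witnesses[OF S] by blast
  have "is_cut V (private_part S X u)" if "u \<in> S" for u
  proof -
    have "private_part S X u \<subseteq> U"
      using X_sub that private_part_subset[of S X u] by blast
    then show ?thesis
      using self_mem_private_part[OF X_S that] U by (auto simp: is_cut_def)
  qed
  then have "real (card S) * min_cut_value V E c \<le> (\<Sum>u\<in>S. ?d (private_part S X u))"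
    using sum_mono[of S "\<lambda>_. min_cut_value V E c"] min_cut_value_le[OF G] by (simp add: mult.commute)
  also have "\<dots> \<le> 2 * ?d U"
    by (rule sum_private_parts_le[OF G nonneg \<open>finite S\<close> S X_sub X_S X_cut])
  finally show ?thesis
    using S \<open>S \<noteq> {}\<close> that by blast
qed

lemma approx_min_cut_complement:
  assumes "graph V E" and "approx_min_cut V E c \<alpha> U"
  shows "approx_min_cut V E c \<alpha> (V - U)"
  using assms by (auto simp: approx_min_cut_def is_cut_def cut_value_complement)

lemma approx_min_cut_certificate:
  assumes conn: "connected_graph V E" and pos: "\<forall>e\<in>E. 0 < c e" and U: "approx_min_cut V E c \<alpha> U"
  obtains S where "certifies E c S U" and "S \<noteq> {}" and "card S \<le> nat \<lfloor>2 * \<alpha>\<rfloor>"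
proof -
  let ?lam = "min_cut_value V E c"
  have G: "graph V E" and nonneg: "\<forall>e\<in>E. 0 \<le> c e"
    using conn pos by (auto simp: connected_graph_def less_imp_le)
  have "is_cut V U" and U_le: "cut_value E c U \<le> \<alpha> * ?lam"
    using U by (simp_all add: approx_min_cut_def)
  then obtain S where S: "certifies E c S U" "S \<noteq> {}"
    and card_le: "real (card S) * ?lam \<le> 2 * cut_value E c U"
    using minimum_certificate_card_bound[OF G nonneg] by blast
  have "0 < ?lam"
    using min_cut_value_pos[OF conn pos \<open>is_cut V U\<close>] .
  moreover have "real (card S) * ?lam \<le> (2 * \<alpha>) * ?lam"
    using card_le U_le by linarith
  ultimately have "real (card S) \<le> 2 * \<alpha>"
    by (simp only: mult_le_cancel_right_pos)
  then have "card S \<le> nat \<lfloor>2 * \<alpha>\<rfloor>"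
    by linarith
  with S show ?thesis
    using that by blast
qed

theorem theorem1p1:
  fixes V :: "'a set" and E :: "'a set set" and c :: "'a set \<Rightarrow> real"
    and \<alpha> :: real and U :: "'a set"
  assumes "connected_graph V E"
    and "\<forall>e\<in>E. c e > 0"
    and "\<alpha> \<ge> 1"
    and "approx_min_cut V E c \<alpha> U"
  shows "\<exists>S T. S \<subseteq> V \<and> T \<subseteq> V \<and>
           card S \<le> nat \<lfloor>2 * \<alpha>\<rfloor> + 1 \<and> card T \<le> nat \<lfloor>2 * \<alpha>\<rfloor> + 1 \<and>
           unique_min_terminal_cut V E c S T U"
proof -
  \<comment> \<open>The certificates even satisfy the sharper bound nat \<lfloor>2 * \<alpha>\<rfloor>.\<close>
  have G: "graph V E" and nonneg: "\<forall>e\<in>E. 0 \<le> c e"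
    using assms(1,2) by (auto simp: connected_graph_def less_imp_le)
  have "U \<subseteq> V"
    using assms(4) by (auto simp: approx_min_cut_def is_cut_def)
  obtain S where S: "certifies E c S U" "S \<noteq> {}" "card S \<le> nat \<lfloor>2 * \<alpha>\<rfloor>"
    using approx_min_cut_certificate[OF assms(1,2,4)] .
  obtain T where T: "certifies E c T (V - U)" "T \<noteq> {}" "card T \<le> nat \<lfloor>2 * \<alpha>\<rfloor>"
    using approx_min_cut_certificate[OF assms(1,2) approx_min_cut_complement[OF G assms(4)]] .
  have "unique_min_terminal_cut V E c S T U"
    using certifies_unique_min_terminal_cut[OF G nonneg \<open>U \<subseteq> V\<close> S(2) T(2) S(1) T(1)] .
  moreover have "S \<subseteq> V" and "T \<subseteq> V"
    using certifies_subset[OF S(1)] certifies_subset[OF T(1)] \<open>U \<subseteq> V\<close> by auto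
  ultimately show ?thesis
    using S(3) T(3) by (intro exI[of _ S] exI[of _ T]) simp
qed

end
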